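(* Let $G$ be a finite perfect graph, let $\omega(G)$ denote its clique number and $\alpha(G)$ its independence number, and let logarithms be base $2$. Then: (i) the edge set $E(G)$ can be partitioned into $\lceil\log(\omega(G))\rceil$ bipartite subgraphs of $G$; (ii) the edge set $E(G)$ can be partitioned into $1+\lceil\log(\alpha(G))\rceil$ comparability subgraphs of $G$.
   Context: A graph $G$ is perfect if every induced subgraph $H$ of $G$ satisfies $\omega(H)=\chi(H)$. A comparability graph is a graph whose vertices are the elements of a partially ordered set, two vertices being adjacent iff the corresponding elements are comparable (equivalently, a graph admitting a transitive orientation). Partitioning $E(G)$ into subgraphs means writing $E(G)$ as a disjoint union of edge sets of subgraphs of $G$. *)

theory Defs
  imports Complex_Main
begin

definition graph :: "'a set \<Rightarrow> 'a set set \<Rightarrow> bool" where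
  "graph V E \<longleftrightarrow> finite V \<and> (\<forall>e\<in>E. \<exists>u v. u \<in> V \<and> v \<in> V \<and> u \<noteq> v \<and> e = {u, v})"

definition induced_edges :: "'a set set \<Rightarrow> 'a set \<Rightarrow> 'a set set" where
  "induced_edges E S = {e \<in> E. e \<subseteq> S}"

definition is_clique :: "'a set \<Rightarrow> 'a set set \<Rightarrow> 'a set \<Rightarrow> bool" where
  "is_clique V E S \<longleftrightarrow> S \<subseteq> V \<and> (\<forall>u\<in>S. \<forall>v\<in>S. u \<noteq> v \<longrightarrow> {u, v} \<in> E)"

definition is_independent :: "'a set \<Rightarrow> 'a set set \<Rightarrow> 'a set \<Rightarrow> bool" where
  "is_independent V E S \<longleftrightarrow> S \<subseteq> V \<and> (\<forall>u\<in>S. \<forall>v\<in>S. {u, v} \<notin> E)"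

definition clique_number :: "'a set \<Rightarrow> 'a set set \<Rightarrow> nat" where
  "clique_number V E = Max {card S | S. is_clique V E S}"

definition independence_number :: "'a set \<Rightarrow> 'a set set \<Rightarrow> nat" where
  "independence_number V E = Max {card S | S. is_independent V E S}"

definition colorable :: "'a set \<Rightarrow> 'a set set \<Rightarrow> nat \<Rightarrow> bool" where
  "colorable V E k \<longleftrightarrow> (\<exists>f :: 'a \<Rightarrow> nat. f ` V \<subseteq> {..<k} \<and>
       (\<forall>u\<in>V. \<forall>v\<in>V. {u, v} \<in> E \<longrightarrow> f u \<noteq> f v))"

definition chromatic_number :: "'a set \<Rightarrow> 'a set set \<Rightarrow> nat" where
  "chromatic_number V E = (LEAST k. colorable V E k)"

definition perfect :: "'a set \<Rightarrow> 'a set set \<Rightarrow> bool" where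
  "perfect V E \<longleftrightarrow> (\<forall>S\<subseteq>V. clique_number S (induced_edges E S)
                              = chromatic_number S (induced_edges E S))"

definition bipartite :: "'a set \<Rightarrow> 'a set set \<Rightarrow> bool" where
  "bipartite V E \<longleftrightarrow> colorable V E 2"

definition comparability :: "'a set \<Rightarrow> 'a set set \<Rightarrow> bool" where
  "comparability V E \<longleftrightarrow> (\<exists>r :: 'a \<Rightarrow> 'a \<Rightarrow> bool.
      (\<forall>u v. r u v \<longrightarrow> u \<in> V \<and> v \<in> V) \<and>
      (\<forall>u. \<not> r u u) \<and>
      (\<forall>u v w. r u v \<longrightarrow> r v w \<longrightarrow> r u w) \<and>
      (\<forall>u\<in>V. \<forall>v\<in>V. u \<noteq> v \<longrightarrow> ({u, v} \<in> E \<longleftrightarrow> r u v \<or> r v u)))"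

text \<open>E can be partitioned into k (possibly empty) edge sets, each of which forms
  a subgraph (on vertex set V) having property P.\<close>
definition edge_partition_into :: "('a set \<Rightarrow> 'a set set \<Rightarrow> bool) \<Rightarrow> 'a set \<Rightarrow> 'a set set \<Rightarrow> nat \<Rightarrow> bool" where
  "edge_partition_into P V E k \<longleftrightarrow> (\<exists>F :: nat \<Rightarrow> 'a set set.
      (\<forall>i<k. F i \<subseteq> E \<and> P V (F i)) \<and>
      (\<Union>i<k. F i) = E \<and>
      (\<forall>i<k. \<forall>j<k. i \<noteq> j \<longrightarrow> F i \<inter> F j = {}))"

end

theory Submission
  imports Defs
begin

(* (i) Colour G with \<omega> colours, read as numbers below 2^k where k = \<lceil>log \<omega>\<rceil>, and put
   the edge uv into class i if i is the first bit in which the colours of u and v differ;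
   bit i is then a proper 2-colouring of class i.
   (ii) By Lovasz's replication lemma every blow-up of a perfect graph is perfect. For a
   suitably weighted blow-up, \<chi> = \<omega> together with double counting yields a clique that
   meets every maximum independent set; removing it lowers \<alpha>, so by induction V is covered
   by \<alpha> cliques. The edges inside these cliques form a disjoint union of cliques, which is a
   comparability graph; the remaining edges split, by the first differing bit of the clique
   labels, into \<lceil>log \<alpha>\<rceil> bipartite graphs, and bipartite graphs are comparability graphs. *)

lemma graph_finite: "graph V E \<Longrightarrow> finite V"
  unfolding graph_def by blast

lemma graph_edgeE:
  assumes "graph V E" "e \<in> E"
  obtains u v where "u \<in> V" "v \<in> V" "u \<noteq> v" "e = {u, v}"
  using assms unfolding graph_def by blast

lemma graph_no_loop: "graph V E \<Longrightarrow> {u} \<notin> E"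
  unfolding graph_def by fastforce

lemma graph_induced: "graph V E \<Longrightarrow> S \<subseteq> V \<Longrightarrow> graph S (induced_edges E S)"
  unfolding graph_def induced_edges_def by (auto simp: finite_subset) (metis insert_subset)

lemma doubleton_mem_induced_edges:
  "{u, v} \<in> induced_edges E S \<longleftrightarrow> {u, v} \<in> E \<and> u \<in> S \<and> v \<in> S"
  unfolding induced_edges_def by auto

lemma induced_edges_self: "graph V E \<Longrightarrow> induced_edges E V = E"
  unfolding induced_edges_def graph_def by auto

lemma induced_edges_induced_edges:
  "T \<subseteq> S \<Longrightarrow> induced_edges (induced_edges E S) T = induced_edges E T"
  unfolding induced_edges_def by auto

lemma is_clique_induced_iff:
  "S \<subseteq> V \<Longrightarrow> is_clique S (induced_edges E S) Q \<longleftrightarrow> Q \<subseteq> S \<and> is_clique V E Q"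
  unfolding is_clique_def induced_edges_def by blast

lemma is_independent_induced_iff:
  "S \<subseteq> V \<Longrightarrow> is_independent S (induced_edges E S) A \<longleftrightarrow> A \<subseteq> S \<and> is_independent V E A"
  unfolding is_independent_def induced_edges_def by blast

lemma card_clique_independent_inter_le_1:
  assumes "is_clique V E K" "is_independent V E A"
  shows "card (K \<inter> A) \<le> 1"
proof (cases "finite (K \<inter> A)")
  case True
  have "a = b" if "a \<in> K \<inter> A" "b \<in> K \<inter> A" for a b
    using assms that unfolding is_clique_def is_independent_def by blast
  then show ?thesis using card_le_Suc0_iff_eq[OF True] by (metis One_nat_def)
qed simp

lemma
  assumes "finite V" "P {}" "\<And>S. P S \<Longrightarrow> S \<subseteq> V"
  shows card_le_Max_card: "P S \<Longrightarrow> card S \<le> Max {card S | S. P S}"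
    and ex_card_eq_Max_card: "\<exists>S. P S \<and> card S = Max {card S | S. P S}"
proof -
  have "{card S | S. P S} \<subseteq> card ` Pow V"
    using assms(3) by blast
  then have fin: "finite {card S | S. P S}"
    by (rule finite_subset) (simp add: assms(1))
  show "P S \<Longrightarrow> card S \<le> Max {card S | S. P S}"
    by (rule Max_ge[OF fin]) blast
  have "{card S | S. P S} \<noteq> {}"
    using assms(2) by blast
  then have "Max {card S | S. P S} \<in> {card S | S. P S}"
    by (rule Max_in[OF fin])
  then show "\<exists>S. P S \<and> card S = Max {card S | S. P S}"
    by auto
qed

lemma card_clique_le_clique_number: "finite V \<Longrightarrow> is_clique V E Q \<Longrightarrow> card Q \<le> clique_number V E"
  unfolding clique_number_def by (rule card_le_Max_card) (auto simp: is_clique_def)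

lemma maximum_clique_exists: "finite V \<Longrightarrow> \<exists>Q. is_clique V E Q \<and> card Q = clique_number V E"
  unfolding clique_number_def by (rule ex_card_eq_Max_card) (auto simp: is_clique_def)

lemma card_independent_le_independence_number:
  "finite V \<Longrightarrow> is_independent V E A \<Longrightarrow> card A \<le> independence_number V E"
  unfolding independence_number_def by (rule card_le_Max_card) (auto simp: is_independent_def)

lemma maximum_independent_set_exists:
  "finite V \<Longrightarrow> \<exists>A. is_independent V E A \<and> card A = independence_number V E"
  unfolding independence_number_def by (rule ex_card_eq_Max_card) (auto simp: is_independent_def)

lemma is_clique_singleton: "x \<in> V \<Longrightarrow> is_clique V E {x}"
  unfolding is_clique_def by blast

lemma is_independent_singleton: "graph V E \<Longrightarrow> x \<in> V \<Longrightarrow> is_independent V E {x}"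
  using graph_no_loop unfolding is_independent_def by fastforce

lemma clique_number_induced_le:
  assumes "finite V" "S \<subseteq> V"
  shows "clique_number S (induced_edges E S) \<le> clique_number V E"
proof -
  obtain Q where "is_clique S (induced_edges E S) Q" "card Q = clique_number S (induced_edges E S)"
    using maximum_clique_exists finite_subset[OF assms(2,1)] by blast
  then show ?thesis
    using card_clique_le_clique_number[OF assms(1)] is_clique_induced_iff[OF assms(2)] by metis
qed

definition proper_coloring :: "'a set \<Rightarrow> 'a set set \<Rightarrow> nat \<Rightarrow> ('a \<Rightarrow> nat) \<Rightarrow> bool" where
  "proper_coloring V E k f \<longleftrightarrow> f ` V \<subseteq> {..<k} \<and> (\<forall>u\<in>V. \<forall>v\<in>V. {u, v} \<in> E \<longrightarrow> f u \<noteq> f v)"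

lemma colorable_iff_proper_coloring: "colorable V E k \<longleftrightarrow> (\<exists>f. proper_coloring V E k f)"
  unfolding colorable_def proper_coloring_def ..

lemma colorable_mono: "colorable V E k \<Longrightarrow> k \<le> m \<Longrightarrow> colorable V E m"
  unfolding colorable_def by (meson lessThan_subset_iff order_trans)

lemma colorable_card: assumes "graph V E" shows "colorable V E (card V)"
proof -
  obtain f where f: "bij_betw f V {..<card V}"
    using ex_bij_betw_finite_nat[OF graph_finite[OF assms]] unfolding lessThan_atLeast0 ..
  have "{u, v} \<in> E \<Longrightarrow> u \<noteq> v" for u v
    using graph_no_loop[OF assms] by fastforce
  then have "proper_coloring V E (card V) f"
    using f unfolding proper_coloring_def bij_betw_def inj_on_def by blast
  then show ?thesis
    unfolding colorable_iff_proper_coloring by blast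
qed

lemma chromatic_number_colorable: "graph V E \<Longrightarrow> colorable V E (chromatic_number V E)"
  unfolding chromatic_number_def by (rule LeastI, rule colorable_card)

lemma chromatic_number_le: "colorable V E k \<Longrightarrow> chromatic_number V E \<le> k"
  unfolding chromatic_number_def by (rule Least_le)

lemma proper_coloring_inj_on_clique:
  "proper_coloring V E k f \<Longrightarrow> is_clique V E Q \<Longrightarrow> inj_on f Q"
  unfolding proper_coloring_def is_clique_def inj_on_def by blast

lemma proper_coloring_card_clique_le:
  assumes "proper_coloring V E k f" "is_clique V E Q"
  shows "card Q \<le> k"
proof -
  have "f ` Q \<subseteq> {..<k}"
    using assms unfolding proper_coloring_def is_clique_def by blast
  then have "card Q \<le> card {..<k}"
    by (rule card_inj_on_le[OF proper_coloring_inj_on_clique[OF assms] _ finite_lessThan])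
  then show ?thesis by simp
qed

lemma proper_coloring_image_clique:
  assumes "proper_coloring V E k f" "is_clique V E Q" "card Q = k"
  shows "f ` Q = {..<k}"
proof (rule card_subset_eq[OF finite_lessThan])
  show "f ` Q \<subseteq> {..<k}"
    using assms unfolding proper_coloring_def is_clique_def by blast
  show "card (f ` Q) = card {..<k}"
    using card_image[OF proper_coloring_inj_on_clique[OF assms(1,2)]] assms(3) by simp
qed

lemma clique_number_le_chromatic_number:
  assumes "graph V E" shows "clique_number V E \<le> chromatic_number V E"
proof -
  obtain Q where Q: "is_clique V E Q" "card Q = clique_number V E"
    using maximum_clique_exists[OF graph_finite[OF assms]] by blast
  obtain f where f: "proper_coloring V E (chromatic_number V E) f"
    using chromatic_number_colorable[OF assms] colorable_iff_proper_coloring by blast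
  show ?thesis
    using proper_coloring_card_clique_le[OF f Q(1)] Q(2) by simp
qed

lemma card_le_colors_times_independence_number:
  assumes "graph V E" "colorable V E k"
  shows "card V \<le> k * independence_number V E"
proof -
  obtain f where f: "proper_coloring V E k f"
    using assms(2) colorable_iff_proper_coloring by blast
  have "V = (\<Union>c<k. {u\<in>V. f u = c})"
    using f unfolding proper_coloring_def by blast
  then have "card V \<le> (\<Sum>c<k. card {u\<in>V. f u = c})"
    by (metis card_UN_le finite_lessThan)
  also have "\<dots> \<le> (\<Sum>c<k. independence_number V E)"
  proof (rule sum_mono)
    fix c
    have "is_independent V E {u\<in>V. f u = c}"
      using f unfolding proper_coloring_def is_independent_def by blast
    then show "card {u\<in>V. f u = c} \<le> independence_number V E"
      using card_independent_le_independence_number graph_finite[OF assms(1)] by blast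
  qed
  finally show ?thesis by simp
qed

lemma colorable_pullback:
  assumes "colorable U F k" "\<pi> ` W \<subseteq> U"
    and "\<And>p q. p \<in> W \<Longrightarrow> q \<in> W \<Longrightarrow> {p, q} \<in> E \<Longrightarrow> {\<pi> p, \<pi> q} \<in> F"
  shows "colorable W E k"
proof -
  obtain f where "proper_coloring U F k f"
    using assms(1) colorable_iff_proper_coloring by blast
  then have "proper_coloring W E k (f \<circ> \<pi>)"
    using assms(2,3) unfolding proper_coloring_def image_subset_iff comp_def by blast
  then show ?thesis
    using colorable_iff_proper_coloring by blast
qed

lemma clique_number_le_embedding:
  assumes "finite W" "inj_on \<pi> W"
    and "\<And>p q. p \<in> W \<Longrightarrow> q \<in> W \<Longrightarrow> p \<noteq> q \<Longrightarrow> {\<pi> p, \<pi> q} \<in> F \<Longrightarrow> {p, q} \<in> E"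
  shows "clique_number (\<pi> ` W) F \<le> clique_number W E"
proof -
  obtain K where K: "is_clique (\<pi> ` W) F K" "card K = clique_number (\<pi> ` W) F"
    using maximum_clique_exists assms(1) by blast
  define K' where "K' = W \<inter> \<pi> -` K"
  have "\<pi> ` K' = K"
    using K(1) unfolding K'_def is_clique_def by blast
  then have "card K' = card K"
    using card_image inj_on_subset[OF assms(2)] unfolding K'_def by (metis Int_lower1)
  moreover have "is_clique W E K'"
    using K(1) assms(2,3) unfolding K'_def is_clique_def inj_on_def by blast
  ultimately show ?thesis
    using card_clique_le_clique_number[OF assms(1)] K(2) by metis
qed

lemma colorable_add_independent:
  assumes "colorable (V - I) (induced_edges E (V - I)) k" "is_independent V E I"
  shows "colorable V E (Suc k)"
proof -
  obtain f where f: "proper_coloring (V - I) (induced_edges E (V - I)) k f"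
    using assms(1) colorable_iff_proper_coloring by blast
  define g where "g u = (if u \<in> I then k else f u)" for u
  have "proper_coloring V E (Suc k) g"
    unfolding proper_coloring_def
  proof (intro conjI ballI impI)
    have "f u < k" if "u \<in> V - I" for u
      using f that unfolding proper_coloring_def by blast
    then show "g ` V \<subseteq> {..<Suc k}"
      unfolding g_def by fastforce
    fix u v assume uv: "u \<in> V" "v \<in> V" "{u, v} \<in> E"
    then have "u \<notin> I \<or> v \<notin> I"
      using assms(2) unfolding is_independent_def by blast
    then show "g u \<noteq> g v"
      using f uv unfolding proper_coloring_def g_def
      by (cases "u \<in> I"; cases "v \<in> I") (auto simp: doubleton_mem_induced_edges)
  qed
  then show ?thesis
    using colorable_iff_proper_coloring by blast
qed

lemma perfect_induced: "perfect V E \<Longrightarrow> S \<subseteq> V \<Longrightarrow> perfect S (induced_edges E S)"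
  unfolding perfect_def by (simp add: induced_edges_induced_edges)

lemma perfect_chromatic_number_eq:
  "graph V E \<Longrightarrow> perfect V E \<Longrightarrow> chromatic_number V E = clique_number V E"
  unfolding perfect_def by (metis induced_edges_self order_refl)

lemma perfectI:
  assumes "graph V E"
    and "\<And>S. S \<subseteq> V \<Longrightarrow> chromatic_number S (induced_edges E S) \<le> clique_number S (induced_edges E S)"
  shows "perfect V E"
  unfolding perfect_def
  using assms clique_number_le_chromatic_number[OF graph_induced[OF assms(1)]] le_antisym by blast

definition true_twins :: "'a set \<Rightarrow> 'a set set \<Rightarrow> 'a \<Rightarrow> 'a \<Rightarrow> bool" where
  "true_twins V E x y \<longleftrightarrow> x \<in> V \<and> y \<in> V \<and> x \<noteq> y \<and> {x, y} \<in> E \<and>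
     (\<forall>v \<in> V - {x, y}. {x, v} \<in> E \<longleftrightarrow> {y, v} \<in> E)"

lemma is_clique_insert_twin:
  assumes tw: "true_twins V E x y" and Q: "is_clique V E Q" "x \<in> Q"
  shows "is_clique V E (insert y Q)"
proof -
  have y_adj: "{y, v} \<in> E" if "v \<in> Q" "v \<noteq> y" for v
  proof (cases "v = x")
    case True
    then show ?thesis using tw unfolding true_twins_def by (simp add: insert_commute)
  next
    case False
    then have "{x, v} \<in> E" "v \<in> V"
      using Q that unfolding is_clique_def by auto
    then show ?thesis using tw False that unfolding true_twins_def by blast
  qed
  show ?thesis
    using Q y_adj tw unfolding is_clique_def true_twins_def by (auto simp: insert_commute)
qed

lemma card_clique_insert_twin_le:
  assumes G: "graph V E" and tw: "true_twins V E x y"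
    and Q: "is_clique V E Q" "x \<in> Q" "y \<notin> Q"
  shows "Suc (card Q) \<le> clique_number V E"
proof -
  have "finite Q"
    using Q(1) finite_subset graph_finite[OF G] unfolding is_clique_def by blast
  then have "card (insert y Q) = Suc (card Q)"
    using Q(3) by simp
  then show ?thesis
    using card_clique_le_clique_number[OF graph_finite[OF G] is_clique_insert_twin[OF tw Q(1,2)]]
    by simp
qed

lemma is_independent_twin_color_class:
  assumes G: "graph V E" and tw: "true_twins V E x y"
    and f: "proper_coloring (V - {y}) (induced_edges E (V - {y})) k f"
  shows "is_independent V E (insert y {u \<in> V - {y}. f u = f x \<and> u \<noteq> x})"
proof -
  have x: "x \<in> V - {y}"
    using tw unfolding true_twins_def by blast
  have same_color: "{u, v} \<notin> E" if "u \<in> V - {y}" "v \<in> V - {y}" "f u = f v" for u v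
    using f that unfolding proper_coloring_def by (auto simp: doubleton_mem_induced_edges)
  have "{y, u} \<notin> E" if "u \<in> V - {y}" "f u = f x" "u \<noteq> x" for u
    using same_color[OF x that(1)] that tw unfolding true_twins_def by auto
  then show ?thesis
    using same_color graph_no_loop[OF G] tw unfolding is_independent_def true_twins_def
    by (auto simp: insert_commute)
qed

lemma colorable_without_color_class:
  assumes G: "graph V E" and perf: "perfect V E"
    and f: "proper_coloring V E (clique_number V E) f" and x: "x \<in> V"
    and no_max: "\<And>Q. is_clique V E Q \<Longrightarrow> card Q = clique_number V E \<Longrightarrow> x \<notin> Q"
  defines "T \<equiv> {u \<in> V. u = x \<or> f u \<noteq> f x}"
  shows "colorable T (induced_edges E T) (clique_number V E - 1)"
proof -
  let ?w = "clique_number V E"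
  have TV: "T \<subseteq> V" unfolding T_def by blast
  have GT: "graph T (induced_edges E T)"
    using graph_induced[OF G TV] .
  have bound: "card Q \<le> ?w - 1" if Q: "is_clique T (induced_edges E T) Q" for Q
  proof -
    have QT: "Q \<subseteq> T" and QV: "is_clique V E Q"
      using Q is_clique_induced_iff[OF TV] by blast+
    have "card Q \<noteq> ?w"
    proof
      assume w: "card Q = ?w"
      have "f x \<in> {..<?w}"
        using f x unfolding proper_coloring_def by blast
      then have "f x \<in> f ` Q"
        using proper_coloring_image_clique[OF f QV w] by simp
      then obtain u where "u \<in> Q" "f u = f x" by auto
      then have "u = x" using QT unfolding T_def by blast
      then show False using no_max[OF QV w] \<open>u \<in> Q\<close> by blast
    qed
    moreover have "card Q \<le> ?w"
      using card_clique_le_clique_number[OF graph_finite[OF G] QV] .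
    ultimately show ?thesis by simp
  qed
  obtain Q where "is_clique T (induced_edges E T) Q" "card Q = clique_number T (induced_edges E T)"
    using maximum_clique_exists[OF graph_finite[OF GT]] by blast
  then have "clique_number T (induced_edges E T) \<le> ?w - 1"
    using bound by metis
  moreover have "colorable T (induced_edges E T) (clique_number T (induced_edges E T))"
    using chromatic_number_colorable[OF GT] perfect_chromatic_number_eq[OF GT perfect_induced[OF perf TV]]
    by simp
  ultimately show ?thesis
    using colorable_mono by blast
qed

(* If a maximum clique of G - y contains x, adding y raises \<omega> and costs one new colour.
   Otherwise y joins the rest of the colour class of x, whose removal lowers \<omega>. *)
lemma twin_chromatic_number_le_clique_number:
  assumes G: "graph V E" and tw: "true_twins V E x y"
    and perf: "perfect (V - {y}) (induced_edges E (V - {y}))"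
  shows "chromatic_number V E \<le> clique_number V E"
proof -
  define V0 where "V0 = V - {y}"
  define E0 where "E0 = induced_edges E V0"
  define w where "w = clique_number V0 E0"
  have V0: "V0 \<subseteq> V" and x: "x \<in> V0" and y: "y \<in> V"
    using tw unfolding V0_def true_twins_def by auto
  have G0: "graph V0 E0" and P0: "perfect V0 E0"
    using graph_induced[OF G V0] perf unfolding V0_def E0_def by simp_all
  obtain f where f: "proper_coloring V0 E0 w f"
    using chromatic_number_colorable[OF G0] colorable_iff_proper_coloring
    unfolding perfect_chromatic_number_eq[OF G0 P0] w_def by blast
  show ?thesis
  proof (cases "\<exists>Q. is_clique V0 E0 Q \<and> card Q = w \<and> x \<in> Q")
    case True
    then obtain Q where Q: "is_clique V0 E0 Q" "card Q = w" "x \<in> Q" by blast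
    then have "Q \<subseteq> V0" "is_clique V E Q"
      using is_clique_induced_iff[OF V0] unfolding E0_def by blast+
    then have "Suc w \<le> clique_number V E"
      using card_clique_insert_twin_le[OF G tw _ Q(3)] Q(2) unfolding V0_def by blast
    moreover have "colorable V E (Suc w)"
      using colorable_add_independent[OF _ is_independent_singleton[OF G y]] f
      unfolding V0_def E0_def colorable_iff_proper_coloring by blast
    ultimately show ?thesis
      using chromatic_number_le order_trans by blast
  next
    case False
    define I where "I = insert y {u \<in> V0. f u = f x \<and> u \<noteq> x}"
    have T: "V - I = {u \<in> V0. u = x \<or> f u \<noteq> f x}"
      unfolding I_def V0_def by blast
    have "induced_edges E0 (V - I) = induced_edges E (V - I)"
      unfolding E0_def T by (rule induced_edges_induced_edges) blast
    then have "colorable (V - I) (induced_edges E (V - I)) (w - 1)"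
      using colorable_without_color_class[OF G0 P0 f[unfolded w_def] x] False
      unfolding T w_def by metis
    moreover have "is_independent V E I"
      using is_independent_twin_color_class[OF G tw] f unfolding I_def V0_def E0_def by blast
    moreover have "1 \<le> w" "w \<le> clique_number V E"
      using card_clique_le_clique_number[OF graph_finite[OF G0] is_clique_singleton[OF x]]
        clique_number_induced_le[OF graph_finite[OF G] V0] unfolding w_def E0_def by simp_all
    ultimately show ?thesis
      using colorable_add_independent chromatic_number_le by fastforce
  qed
qed

(* Every vertex p of W is a copy of the vertex \<pi> p of the original graph. *)
definition blowup_edges :: "('b \<Rightarrow> 'a) \<Rightarrow> 'a set set \<Rightarrow> 'b set \<Rightarrow> 'b set set" where
  "blowup_edges \<pi> E W =
     {{p, q} | p q. p \<in> W \<and> q \<in> W \<and> p \<noteq> q \<and> (\<pi> p = \<pi> q \<or> {\<pi> p, \<pi> q} \<in> E)}"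

lemma graph_blowup_edges: "finite W \<Longrightarrow> graph W (blowup_edges \<pi> E W)"
  unfolding graph_def blowup_edges_def by blast

lemma doubleton_mem_blowup_edges:
  assumes "p \<in> W" "q \<in> W"
  shows "{p, q} \<in> blowup_edges \<pi> E W \<longleftrightarrow> p \<noteq> q \<and> (\<pi> p = \<pi> q \<or> {\<pi> p, \<pi> q} \<in> E)"
proof
  assume "{p, q} \<in> blowup_edges \<pi> E W"
  then obtain p' q' where "{p, q} = {p', q'}" "p' \<noteq> q'" "\<pi> p' = \<pi> q' \<or> {\<pi> p', \<pi> q'} \<in> E"
    unfolding blowup_edges_def by blast
  then show "p \<noteq> q \<and> (\<pi> p = \<pi> q \<or> {\<pi> p, \<pi> q} \<in> E)"
    by (auto simp: doubleton_eq_iff insert_commute)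
next
  assume "p \<noteq> q \<and> (\<pi> p = \<pi> q \<or> {\<pi> p, \<pi> q} \<in> E)"
  then show "{p, q} \<in> blowup_edges \<pi> E W"
    using assms unfolding blowup_edges_def by blast
qed

lemma induced_blowup_edges:
  "S \<subseteq> W \<Longrightarrow> induced_edges (blowup_edges \<pi> E W) S = blowup_edges \<pi> E S"
  unfolding induced_edges_def blowup_edges_def by blast

lemma true_twins_blowup_edges:
  assumes "p \<in> W" "q \<in> W" "p \<noteq> q" "\<pi> p = \<pi> q"
  shows "true_twins W (blowup_edges \<pi> E W) p q"
  using assms unfolding true_twins_def by (auto simp: doubleton_mem_blowup_edges)

lemma blowup_inj_chromatic_number_le_clique_number:
  assumes G: "graph V E" and P: "perfect V E"
    and W: "finite W" "\<pi> ` W \<subseteq> V" and inj: "inj_on \<pi> W"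
  shows "chromatic_number W (blowup_edges \<pi> E W) \<le> clique_number W (blowup_edges \<pi> E W)"
proof -
  define U where "U = \<pi> ` W"
  define F where "F = induced_edges E U"
  have GU: "graph U F" and PU: "perfect U F"
    using graph_induced[OF G] perfect_induced[OF P] W(2) unfolding U_def F_def by simp_all
  have adj: "{p, q} \<in> blowup_edges \<pi> E W \<longleftrightarrow> p \<noteq> q \<and> {\<pi> p, \<pi> q} \<in> F" if "p \<in> W" "q \<in> W" for p q
    using that inj doubleton_mem_blowup_edges[OF that]
    unfolding F_def U_def inj_on_def by (auto simp: doubleton_mem_induced_edges)
  have "colorable W (blowup_edges \<pi> E W) (chromatic_number U F)"
    using colorable_pullback[OF chromatic_number_colorable[OF GU]] adj unfolding U_def by blast
  then have "chromatic_number W (blowup_edges \<pi> E W) \<le> chromatic_number U F"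
    by (rule chromatic_number_le)
  also have "\<dots> = clique_number U F"
    using perfect_chromatic_number_eq[OF GU PU] .
  also have "\<dots> \<le> clique_number W (blowup_edges \<pi> E W)"
    unfolding U_def using clique_number_le_embedding[OF W(1) inj] adj by blast
  finally show ?thesis .
qed

lemma blowup_chromatic_number_le_clique_number:
  assumes G: "graph V E" and P: "perfect V E"
  shows "finite W \<Longrightarrow> \<pi> ` W \<subseteq> V \<Longrightarrow>
    chromatic_number W (blowup_edges \<pi> E W) \<le> clique_number W (blowup_edges \<pi> E W)"
proof (induction "card W" arbitrary: W rule: less_induct)
  case less
  show ?case
  proof (cases "inj_on \<pi> W")
    case True
    then show ?thesis
      using blowup_inj_chromatic_number_le_clique_number[OF G P less.prems] by blast
  next
    case False
    then obtain p q where pq: "p \<in> W" "q \<in> W" "p \<noteq> q" "\<pi> p = \<pi> q"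
      unfolding inj_on_def by blast
    have "perfect (W - {q}) (blowup_edges \<pi> E (W - {q}))"
    proof (rule perfectI)
      show "graph (W - {q}) (blowup_edges \<pi> E (W - {q}))"
        using graph_blowup_edges less.prems(1) by blast
      fix S assume S: "S \<subseteq> W - {q}"
      then have "S \<subset> W"
        using pq(2) by blast
      have "card S < card W"
        using psubset_card_mono[OF less.prems(1) \<open>S \<subset> W\<close>] .
      moreover have "finite S"
        using finite_subset[OF _ less.prems(1)] \<open>S \<subset> W\<close> by blast
      moreover have "\<pi> ` S \<subseteq> V"
        using \<open>S \<subset> W\<close> less.prems(2) by blast
      ultimately show "chromatic_number S (induced_edges (blowup_edges \<pi> E (W - {q})) S)
          \<le> clique_number S (induced_edges (blowup_edges \<pi> E (W - {q})) S)"
        unfolding induced_blowup_edges[OF S] by (rule less.hyps)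
    qed
    then show ?thesis
      using twin_chromatic_number_le_clique_number[OF graph_blowup_edges[OF less.prems(1)]
          true_twins_blowup_edges[OF pq]]
      unfolding induced_blowup_edges[OF Diff_subset] by blast
  qed
qed

lemma perfect_blowup:
  assumes "graph V E" "perfect V E" "finite W" "\<pi> ` W \<subseteq> V"
  shows "perfect W (blowup_edges \<pi> E W)"
proof (rule perfectI)
  show "graph W (blowup_edges \<pi> E W)"
    using graph_blowup_edges[OF assms(3)] .
  fix S assume S: "S \<subseteq> W"
  have "finite S"
    by (rule finite_subset[OF S assms(3)])
  moreover have "\<pi> ` S \<subseteq> V"
    using S assms(4) by blast
  ultimately show "chromatic_number S (induced_edges (blowup_edges \<pi> E W) S)
      \<le> clique_number S (induced_edges (blowup_edges \<pi> E W) S)"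
    unfolding induced_blowup_edges[OF S] by (rule blowup_chromatic_number_le_clique_number[OF assms(1,2)])
qed

lemma is_clique_blowup_image:
  assumes W: "\<pi> ` W \<subseteq> V" and Q: "is_clique W (blowup_edges \<pi> E W) Q"
  shows "is_clique V E (\<pi> ` Q)"
  unfolding is_clique_def
proof (intro conjI ballI impI)
  have QW: "Q \<subseteq> W"
    using Q unfolding is_clique_def by blast
  then show "\<pi> ` Q \<subseteq> V"
    using W by blast
  fix a b assume "a \<in> \<pi> ` Q" "b \<in> \<pi> ` Q" "a \<noteq> b"
  then obtain p q where pq: "p \<in> Q" "q \<in> Q" "a = \<pi> p" "b = \<pi> q" "p \<noteq> q"
    by blast
  then have "{p, q} \<in> blowup_edges \<pi> E W"
    using Q unfolding is_clique_def by blast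
  moreover have "p \<in> W" "q \<in> W"
    using pq QW by blast+
  ultimately have "\<pi> p = \<pi> q \<or> {\<pi> p, \<pi> q} \<in> E"
    by (simp add: doubleton_mem_blowup_edges)
  then show "{a, b} \<in> E"
    using pq \<open>a \<noteq> b\<close> by simp
qed

lemma is_independent_blowup_image:
  assumes G: "graph V E" and W: "\<pi> ` W \<subseteq> V" and A: "is_independent W (blowup_edges \<pi> E W) A"
  shows "inj_on \<pi> A" "is_independent V E (\<pi> ` A)"
proof -
  have AW: "A \<subseteq> W"
    using A unfolding is_independent_def by blast
  have nonadj: "p = q \<or> \<pi> p \<noteq> \<pi> q \<and> {\<pi> p, \<pi> q} \<notin> E" if "p \<in> A" "q \<in> A" for p q
    using A that AW doubleton_mem_blowup_edges[of p W q \<pi> E] unfolding is_independent_def by blast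
  then show "inj_on \<pi> A"
    unfolding inj_on_def by blast
  show "is_independent V E (\<pi> ` A)"
    unfolding is_independent_def
  proof (intro conjI ballI)
    show "\<pi> ` A \<subseteq> V"
      using AW W by blast
    fix a b assume "a \<in> \<pi> ` A" "b \<in> \<pi> ` A"
    then obtain p q where "p \<in> A" "q \<in> A" "a = \<pi> p" "b = \<pi> q"
      by blast
    then show "{a, b} \<notin> E"
      using nonadj[of p q] graph_no_loop[OF G, of "\<pi> p"] by auto
  qed
qed

lemma sum_card_filter_eq_sum_card_inter:
  assumes "finite X" "finite K"
  shows "(\<Sum>x\<in>X. card {k\<in>K. x \<in> g k}) = (\<Sum>k\<in>K. card (X \<inter> g k))"
proof -
  have "(\<Sum>x\<in>X. card {k\<in>K. x \<in> g k}) = (\<Sum>x\<in>X. \<Sum>k\<in>K. if x \<in> g k then 1 else 0)"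
    using assms(2) by (simp add: sum.inter_filter[symmetric])
  also have "\<dots> = (\<Sum>k\<in>K. \<Sum>x\<in>X. if x \<in> g k then 1 else 0)"
    by (rule sum.swap)
  also have "\<dots> = (\<Sum>k\<in>K. card (X \<inter> g k))"
    using assms(1) by (simp add: sum.inter_filter[symmetric] Int_def)
  finally show ?thesis .
qed

lemma weighted_clique_bound:
  fixes k :: "'a \<Rightarrow> nat"
  assumes G: "graph V E" and P: "perfect V E"
  shows "\<exists>K. is_clique V E K \<and> (\<Sum>x\<in>V. k x) \<le> independence_number V E * (\<Sum>x\<in>K. k x)"
proof -
  define W where "W = Sigma V (\<lambda>x. {..<k x})"
  define B where "B = blowup_edges fst E W"
  have W: "finite W" "fst ` W \<subseteq> V"
    using graph_finite[OF G] unfolding W_def by auto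
  have GB: "graph W B" and PB: "perfect W B"
    using graph_blowup_edges[OF W(1)] perfect_blowup[OF G P W] unfolding B_def by blast+
  obtain Q where Q: "is_clique W B Q" "card Q = clique_number W B"
    using maximum_clique_exists[OF W(1)] by blast
  obtain A where A: "is_independent W B A" "card A = independence_number W B"
    using maximum_independent_set_exists[OF W(1)] by blast
  have "(\<Sum>x\<in>V. k x) = card W"
    unfolding W_def using card_SigmaI[OF graph_finite[OF G], of "\<lambda>x. {..<k x}"] by simp
  also have "\<dots> \<le> chromatic_number W B * independence_number W B"
    using card_le_colors_times_independence_number[OF GB chromatic_number_colorable[OF GB]] .
  also have "\<dots> \<le> (\<Sum>x\<in>fst ` Q. k x) * independence_number V E"
  proof (rule mult_le_mono)
    have "finite (fst ` Q)"
      using Q(1) finite_subset[OF _ W(1)] unfolding is_clique_def by blast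
    moreover have "Q \<subseteq> Sigma (fst ` Q) (\<lambda>x. {..<k x})"
      using Q(1) unfolding is_clique_def W_def by force
    ultimately have "card Q \<le> card (Sigma (fst ` Q) (\<lambda>x. {..<k x}))"
      by (intro card_mono) auto
    also have "\<dots> = (\<Sum>x\<in>fst ` Q. k x)"
      using card_SigmaI[OF \<open>finite (fst ` Q)\<close>, of "\<lambda>x. {..<k x}"] by simp
    finally have "card Q \<le> (\<Sum>x\<in>fst ` Q. k x)" .
    then show "chromatic_number W B \<le> (\<Sum>x\<in>fst ` Q. k x)"
      using Q(2) perfect_chromatic_number_eq[OF GB PB] by simp
    have "card A = card (fst ` A)"
      using card_image[OF is_independent_blowup_image(1)[OF G W(2) A(1)[unfolded B_def]]] by simp
    then show "independence_number W B \<le> independence_number V E"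
      using A(2) card_independent_le_independence_number[OF graph_finite[OF G]
          is_independent_blowup_image(2)[OF G W(2) A(1)[unfolded B_def]]] by simp
  qed
  finally show ?thesis
    using is_clique_blowup_image[OF W(2) Q(1)[unfolded B_def]] by (metis mult.commute)
qed

lemma clique_weight_le:
  assumes fin: "finite KK" and K0: "is_clique V E K0" "K0 \<in> KK" "finite K0"
    and A: "\<And>K. K \<in> KK \<Longrightarrow> is_independent V E (A K)" "K0 \<inter> A K0 = {}"
  shows "(\<Sum>x\<in>K0. card {K \<in> KK. x \<in> A K}) \<le> card KK - 1"
proof -
  have "(\<Sum>x\<in>K0. card {K \<in> KK. x \<in> A K}) = (\<Sum>K\<in>KK. card (K0 \<inter> A K))"
    by (rule sum_card_filter_eq_sum_card_inter[OF K0(3) fin])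
  also have "\<dots> = card (K0 \<inter> A K0) + (\<Sum>K\<in>KK - {K0}. card (K0 \<inter> A K))"
    using sum.remove[OF fin K0(2)] .
  also have "\<dots> \<le> 0 + (\<Sum>K\<in>KK - {K0}. 1)"
    using card_clique_independent_inter_le_1[OF K0(1) A(1)] A(2) by (intro add_mono sum_mono) simp_all
  finally show ?thesis
    using K0(2) fin by simp
qed

(* Otherwise pick for every clique K a maximum independent set Af K missing K and weight each
   vertex by the number of sets Af K containing it: the total weight is card KK * \<alpha>, while
   every clique weighs at most card KK - 1. *)
lemma clique_meeting_all_maximum_independent_sets:
  assumes G: "graph V E" and P: "perfect V E" and ne: "V \<noteq> {}"
  shows "\<exists>K. is_clique V E K \<and>
    (\<forall>A. is_independent V E A \<and> card A = independence_number V E \<longrightarrow> A \<inter> K \<noteq> {})"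
proof (rule ccontr)
  let ?\<alpha> = "independence_number V E"
  assume "\<not> ?thesis"
  then obtain Af where Af: "\<And>K. is_clique V E K \<Longrightarrow>
      is_independent V E (Af K) \<and> card (Af K) = ?\<alpha> \<and> Af K \<inter> K = {}"
    by metis
  define KK where "KK = {K. is_clique V E K}"
  have fin: "finite V" "finite KK"
    using graph_finite[OF G] finite_subset[of KK "Pow V"] unfolding KK_def is_clique_def by auto
  define k where "k x = card {K \<in> KK. x \<in> Af K}" for x
  obtain K0 where K0: "is_clique V E K0" "(\<Sum>x\<in>V. k x) \<le> ?\<alpha> * (\<Sum>x\<in>K0. k x)"
    using weighted_clique_bound[OF G P] by blast
  have "(\<Sum>x\<in>V. k x) = (\<Sum>K\<in>KK. card (V \<inter> Af K))"
    unfolding k_def using sum_card_filter_eq_sum_card_inter[OF fin] .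
  also have "\<dots> = card KK * ?\<alpha>"
    using Af unfolding KK_def is_independent_def by (simp add: Int_absorb1)
  finally have total: "(\<Sum>x\<in>V. k x) = card KK * ?\<alpha>" .
  have "K0 \<in> KK"
    using K0(1) unfolding KK_def by blast
  moreover have "finite K0"
    using finite_subset[OF _ fin(1)] K0(1) unfolding is_clique_def by blast
  ultimately have "(\<Sum>x\<in>K0. k x) \<le> card KK - 1"
    unfolding k_def using clique_weight_le[OF fin(2) K0(1)] Af unfolding KK_def by blast
  then have "card KK * ?\<alpha> \<le> ?\<alpha> * (card KK - 1)"
    using order_trans[OF K0(2)[unfolded total] mult_le_mono2] by blast
  moreover have "?\<alpha> * (card KK - 1) < ?\<alpha> * card KK"
  proof (rule mult_less_mono2)
    show "card KK - 1 < card KK"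
      using \<open>K0 \<in> KK\<close> fin(2) card_0_eq by fastforce
    obtain v where "v \<in> V"
      using ne by blast
    then show "0 < ?\<alpha>"
      using card_independent_le_independence_number[OF fin(1) is_independent_singleton[OF G]]
      by fastforce
  qed
  ultimately show False
    by (simp add: mult.commute)
qed

lemma independence_number_diff_less:
  assumes fin: "finite V"
    and meets: "\<And>A. is_independent V E A \<Longrightarrow> card A = independence_number V E \<Longrightarrow> A \<inter> K \<noteq> {}"
  shows "independence_number (V - K) (induced_edges E (V - K)) < independence_number V E"
proof -
  obtain A where A: "is_independent (V - K) (induced_edges E (V - K)) A"
    "card A = independence_number (V - K) (induced_edges E (V - K))"
    using maximum_independent_set_exists[OF finite_Diff[OF fin]] by blast
  then have "A \<subseteq> V - K" "is_independent V E A"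
    using is_independent_induced_iff[of "V - K" V E A] by blast+
  then have "card A \<le> independence_number V E" "card A \<noteq> independence_number V E"
    using card_independent_le_independence_number[OF fin] meets[of A] by blast+
  then show ?thesis
    using A(2) by simp
qed

definition clique_cover :: "'a set \<Rightarrow> 'a set set \<Rightarrow> nat \<Rightarrow> ('a \<Rightarrow> nat) \<Rightarrow> bool" where
  "clique_cover V E k c \<longleftrightarrow> c ` V \<subseteq> {..<k} \<and> (\<forall>u\<in>V. \<forall>v\<in>V. u \<noteq> v \<and> c u = c v \<longrightarrow> {u, v} \<in> E)"

lemma clique_cover_mono: "clique_cover V E k c \<Longrightarrow> k \<le> m \<Longrightarrow> clique_cover V E m c"
  unfolding clique_cover_def by (meson lessThan_subset_iff order_trans)

lemma clique_cover_add_clique: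
  assumes c: "clique_cover (V - K) (induced_edges E (V - K)) k c" and K: "is_clique V E K"
  shows "clique_cover V E (Suc k) (\<lambda>u. if u \<in> K then k else c u)"
  unfolding clique_cover_def
proof (intro conjI ballI impI)
  have "c u < k" if "u \<in> V - K" for u
    using c that unfolding clique_cover_def by blast
  then show "(\<lambda>u. if u \<in> K then k else c u) ` V \<subseteq> {..<Suc k}"
    by fastforce
  fix u v assume "u \<in> V" "v \<in> V" "u \<noteq> v \<and> (if u \<in> K then k else c u) = (if v \<in> K then k else c v)"
  then show "{u, v} \<in> E"
    using K c \<open>\<And>u. u \<in> V - K \<Longrightarrow> c u < k\<close> unfolding is_clique_def clique_cover_def
    by (cases "u \<in> K"; cases "v \<in> K") (force simp: doubleton_mem_induced_edges)+
qed

lemma clique_cover_exists: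
  "graph V E \<Longrightarrow> perfect V E \<Longrightarrow> \<exists>c. clique_cover V E (independence_number V E) c"
proof (induction "card V" arbitrary: V E rule: less_induct)
  case less
  show ?case
  proof (cases "V = {}")
    case True
    then show ?thesis
      unfolding clique_cover_def by simp
  next
    case False
    have fin: "finite V"
      using graph_finite[OF less.prems(1)] .
    obtain K where K: "is_clique V E K"
      "\<And>A. is_independent V E A \<Longrightarrow> card A = independence_number V E \<Longrightarrow> A \<inter> K \<noteq> {}"
      using clique_meeting_all_maximum_independent_sets[OF less.prems False] by blast
    have "K \<noteq> {}"
      using K(2) maximum_independent_set_exists[OF fin] by blast
    moreover have "K \<subseteq> V"
      using K(1) unfolding is_clique_def by blast
    ultimately have "V - K \<subset> V"
      by blast
    then have "card (V - K) < card V"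
      by (rule psubset_card_mono[OF fin])
    then obtain c where "clique_cover (V - K) (induced_edges E (V - K))
        (independence_number (V - K) (induced_edges E (V - K))) c"
      using less.hyps graph_induced[OF less.prems(1)] perfect_induced[OF less.prems(2)] by blast
    then have "clique_cover V E (Suc (independence_number (V - K) (induced_edges E (V - K))))
        (\<lambda>u. if u \<in> K then independence_number (V - K) (induced_edges E (V - K)) else c u)"
      using clique_cover_add_clique K(1) by blast
    moreover have "independence_number (V - K) (induced_edges E (V - K)) < independence_number V E"
      using fin K(2) by (rule independence_number_diff_less)
    ultimately show ?thesis
      using clique_cover_mono Suc_leI by blast
  qed
qed

definition first_diff_bit :: "nat \<Rightarrow> nat \<Rightarrow> nat" where
  "first_diff_bit a b = (LEAST i. bit a i \<noteq> bit b i)"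

lemma first_diff_bit_commute: "first_diff_bit a b = first_diff_bit b a"
  unfolding first_diff_bit_def by metis

lemma bit_first_diff_bit:
  assumes "a \<noteq> b"
  shows "bit a (first_diff_bit a b) \<noteq> bit b (first_diff_bit a b)"
proof -
  obtain i where "bit a i \<noteq> bit b i"
    using assms bit_eq_iff by blast
  then show ?thesis
    unfolding first_diff_bit_def by (rule LeastI)
qed

lemma first_diff_bit_less:
  assumes "a \<noteq> b" "a < 2 ^ k" "b < 2 ^ k"
  shows "first_diff_bit a b < k"
  using bit_first_diff_bit[OF assms(1)] assms(2,3)
  by (metis bit_take_bit_iff take_bit_nat_eq_self)

lemma less_two_power_ceiling_log:
  assumes "(n::nat) < m"
  shows "n < 2 ^ nat \<lceil>log 2 (real m)\<rceil>"
proof -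
  have "real m = 2 powr (log 2 (real m))"
    using assms by simp
  also have "\<dots> \<le> 2 powr (real (nat \<lceil>log 2 (real m)\<rceil>))"
    by (intro powr_mono) (auto, linarith)
  also have "\<dots> = real (2 ^ nat \<lceil>log 2 (real m)\<rceil>)"
    by (simp add: powr_realpow)
  finally show ?thesis
    using assms by linarith
qed

definition same_class :: "('a \<Rightarrow> nat) \<Rightarrow> 'a set set \<Rightarrow> 'a set set" where
  "same_class c E = {e \<in> E. \<exists>u v. e = {u, v} \<and> c u = c v}"

definition bit_class :: "('a \<Rightarrow> nat) \<Rightarrow> 'a set set \<Rightarrow> nat \<Rightarrow> 'a set set" where
  "bit_class c E i = {e \<in> E. \<exists>u v. e = {u, v} \<and> c u \<noteq> c v \<and> first_diff_bit (c u) (c v) = i}"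

lemma doubleton_mem_same_class: "{u, v} \<in> same_class c E \<longleftrightarrow> {u, v} \<in> E \<and> c u = c v"
  unfolding same_class_def by (auto simp: doubleton_eq_iff)

lemma doubleton_mem_bit_class:
  "{u, v} \<in> bit_class c E i \<longleftrightarrow> {u, v} \<in> E \<and> c u \<noteq> c v \<and> first_diff_bit (c u) (c v) = i"
  unfolding bit_class_def by (auto simp: doubleton_eq_iff first_diff_bit_commute)

lemma bit_class_disjoint: "i \<noteq> j \<Longrightarrow> bit_class c E i \<inter> bit_class c E j = {}"
  unfolding bit_class_def by (auto simp: doubleton_eq_iff first_diff_bit_commute)

lemma same_class_bit_class_disjoint: "same_class c E \<inter> bit_class c E i = {}"
  unfolding same_class_def bit_class_def by (auto simp: doubleton_eq_iff)

lemma bit_class_subset: "bit_class c E i \<subseteq> E"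
  unfolding bit_class_def by blast

lemma Union_bit_class:
  assumes "graph V E" "c ` V \<subseteq> {..<2 ^ k}"
  shows "(\<Union>i<k. bit_class c E i) = E - same_class c E"
proof
  show "(\<Union>i<k. bit_class c E i) \<subseteq> E - same_class c E"
    using bit_class_subset same_class_bit_class_disjoint by blast
  show "E - same_class c E \<subseteq> (\<Union>i<k. bit_class c E i)"
  proof
    fix e assume e: "e \<in> E - same_class c E"
    then obtain u v where uv: "u \<in> V" "v \<in> V" "e = {u, v}"
      using graph_edgeE[OF assms(1)] by blast
    then have "c u \<noteq> c v"
      using e unfolding uv(3) by (simp add: doubleton_mem_same_class)
    then have "e \<in> bit_class c E (first_diff_bit (c u) (c v))"
      using e uv(3) by (simp add: doubleton_mem_bit_class)
    moreover have "first_diff_bit (c u) (c v) < k"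
      using first_diff_bit_less[OF \<open>c u \<noteq> c v\<close>] assms(2) uv by auto
    ultimately show "e \<in> (\<Union>i<k. bit_class c E i)"
      by blast
  qed
qed

lemma bipartite_bit_class: "bipartite V (bit_class c E i)"
proof -
  have "proper_coloring V (bit_class c E i) 2 (\<lambda>u. if bit (c u) i then 1 else 0)"
    unfolding proper_coloring_def
    using bit_first_diff_bit by (auto simp: doubleton_mem_bit_class)
  then show ?thesis
    unfolding bipartite_def colorable_iff_proper_coloring by blast
qed

lemma comparability_if_bipartite:
  assumes "bipartite V F"
  shows "comparability V F"
proof -
  obtain f where f: "proper_coloring V F 2 f"
    using assms unfolding bipartite_def colorable_iff_proper_coloring by blast
  have adj: "f u \<noteq> f v \<and> f u < 2 \<and> f v < 2" if "u \<in> V" "v \<in> V" "{u, v} \<in> F" for u v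
    using f that unfolding proper_coloring_def by auto
  define r where "r u v \<longleftrightarrow> u \<in> V \<and> v \<in> V \<and> {u, v} \<in> F \<and> f u = 0" for u v
  show ?thesis
    unfolding comparability_def
  proof (rule exI[of _ r], intro conjI allI impI ballI)
    fix u v w
    show "r u v \<Longrightarrow> u \<in> V" "r u v \<Longrightarrow> v \<in> V"
      unfolding r_def by blast+
    show "\<not> r u u"
      using adj[of u u] unfolding r_def by auto
    show "r u v \<Longrightarrow> r v w \<Longrightarrow> r u w"
      using adj[of u v] unfolding r_def by auto
  next
    fix u v assume "u \<in> V" "v \<in> V" "u \<noteq> v"
    then show "{u, v} \<in> F \<longleftrightarrow> r u v \<or> r v u"
      using adj[of u v] unfolding r_def by (auto simp: insert_commute)
  qed
qed

lemma comparability_same_class: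
  assumes "finite V" "clique_cover V E k c"
  shows "comparability V (same_class c E)"
proof -
  obtain h :: "'a \<Rightarrow> nat" where h: "inj_on h V"
    using assms(1) finite_imp_inj_to_nat_seg by blast
  define r where "r u v \<longleftrightarrow> u \<in> V \<and> v \<in> V \<and> c u = c v \<and> h u < h v" for u v
  show ?thesis
    unfolding comparability_def
  proof (rule exI[of _ r], intro conjI allI impI ballI)
    fix u v w
    show "r u v \<Longrightarrow> u \<in> V" "r u v \<Longrightarrow> v \<in> V" "\<not> r u u" "r u v \<Longrightarrow> r v w \<Longrightarrow> r u w"
      unfolding r_def by auto
  next
    fix u v assume "u \<in> V" "v \<in> V" "u \<noteq> v"
    then show "{u, v} \<in> same_class c E \<longleftrightarrow> r u v \<or> r v u"
      using assms(2) h unfolding clique_cover_def inj_on_def r_def doubleton_mem_same_class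
      by (metis linorder_neqE_nat)
  qed
qed

lemma same_class_subset: "same_class c E \<subseteq> E"
  unfolding same_class_def by blast

lemma edge_partition_bipartite_clique_number:
  assumes G: "graph V E" and P: "perfect V E"
  shows "edge_partition_into bipartite V E (nat \<lceil>log 2 (real (clique_number V E))\<rceil>)"
proof -
  let ?k = "nat \<lceil>log 2 (real (clique_number V E))\<rceil>"
  obtain f where f: "proper_coloring V E (clique_number V E) f"
    using chromatic_number_colorable[OF G] colorable_iff_proper_coloring
    unfolding perfect_chromatic_number_eq[OF G P] by blast
  then have "f ` V \<subseteq> {..<2 ^ ?k}"
    unfolding proper_coloring_def by (auto intro: less_two_power_ceiling_log)
  moreover have "same_class f E = {}"
  proof -
    have "e \<notin> same_class f E" if "e \<in> E" for e
      using graph_edgeE[OF G that] f unfolding proper_coloring_def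
      by (metis doubleton_mem_same_class)
    then show ?thesis
      using same_class_subset by blast
  qed
  ultimately have "(\<Union>i<?k. bit_class f E i) = E"
    using Union_bit_class[OF G] by simp
  then show ?thesis
    unfolding edge_partition_into_def
    by (intro exI[of _ "bit_class f E"] conjI allI impI bit_class_subset bipartite_bit_class bit_class_disjoint)
qed

lemma edge_partition_comparability_independence_number:
  assumes G: "graph V E" and P: "perfect V E"
  shows "edge_partition_into comparability V E (1 + nat \<lceil>log 2 (real (independence_number V E))\<rceil>)"
proof -
  let ?k = "nat \<lceil>log 2 (real (independence_number V E))\<rceil>"
  obtain c where c: "clique_cover V E (independence_number V E) c"
    using clique_cover_exists[OF G P] by blast
  then have "c ` V \<subseteq> {..<2 ^ ?k}"
    unfolding clique_cover_def by (auto intro: less_two_power_ceiling_log)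
  define F where "F i = (case i of 0 \<Rightarrow> same_class c E | Suc j \<Rightarrow> bit_class c E j)" for i
  have "(\<Union>i<1 + ?k. F i) = same_class c E \<union> (\<Union>j<?k. bit_class c E j)"
    unfolding F_def by (simp add: lessThan_Suc_eq_insert_0 image_image)
  also have "\<dots> = E"
    using Union_bit_class[OF G \<open>c ` V \<subseteq> {..<2 ^ ?k}\<close>] same_class_subset by blast
  finally have "(\<Union>i<1 + ?k. F i) = E" .
  moreover have "F i \<subseteq> E \<and> comparability V (F i)" for i
  proof (cases i)
    case 0
    then show ?thesis
      using same_class_subset comparability_same_class[OF graph_finite[OF G] c] unfolding F_def by simp
  next
    case (Suc j)
    then show ?thesis
      unfolding F_def using bit_class_subset comparability_if_bipartite[OF bipartite_bit_class] by auto
  qed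
  moreover have "F i \<inter> F j = {}" if "i \<noteq> j" for i j
    using that same_class_bit_class_disjoint bit_class_disjoint unfolding F_def
    by (cases i; cases j) (simp_all add: Int_commute)
  ultimately show ?thesis
    unfolding edge_partition_into_def by blast
qed

theorem proposition1:
  fixes V :: "'a set" and E :: "'a set set"
  assumes "graph V E" and "perfect V E"
  shows "edge_partition_into bipartite V E
           (nat \<lceil>log 2 (real (clique_number V E))\<rceil>) \<and>
         edge_partition_into comparability V E
           (1 + nat \<lceil>log 2 (real (independence_number V E))\<rceil>)"
  using edge_partition_bipartite_clique_number[OF assms]
    edge_partition_comparability_independence_number[OF assms] by blast

end
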